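(* Consider the linear regression model $X_k=\theta\phi_k+\varepsilon_k$, $k=1,\dots,n$, where $\theta\in\mathbb{R}$ is an unknown parameter, $(\phi_k)_{k=1,\dots,n}$ is a sequence of independent random variables, $(\varepsilon_k)_{k=1,\dots,n}$ is a sequence of martingale differences with respect to its natural filtration (i.e. $\mathbf{E}[\varepsilon_i\mid\sigma\{\varepsilon_j,j\le i-1\}]=0$), and $(\phi_k)$ and $(\varepsilon_k)$ are independent. Let $\theta_n=\sum_{k=1}^n\phi_kX_k\big/\sum_{k=1}^n\phi_k^2$ be the least-squares estimator. Assume that for constants $\alpha\in(0,1)$ and $D$, $$\mathbf{E}\big[\varepsilon_i^2e^{|\varepsilon_i|^\alpha}\,\big|\,\sigma\{\varepsilon_j,j\le i-1\}\big]\le D\quad\text{for all } i\in[1,n].$$ Then for any $u\ge\max\{D,1\}$ and all $x>0$, for each choice of sign $\pm$, $$\mathbf{P}\Big(\pm(\theta_n-\theta)\sqrt{\textstyle\sum_{k=1}^n\phi_k^2}\ge x\Big)\le\begin{cases}2\exp\Big\{-\dfrac{x^2}{2u}\Big\}&\text{if }0\le x<u^{1/(2-\alpha)},\\[2mm] 2\exp\Big\{-\dfrac12x^\alpha\Big\}&\text{if }x\ge u^{1/(2-\alpha)},\end{cases}$$ and this is at most $2\exp\Big\{-\dfrac{x^2}{2(u+x^{2-\alpha})}\Big\}$. In particular, for any $x>0$ there is $c_x>0$ not depending on $n$ such that $$\mathbf{P}\Big(\pm(\theta_n-\theta)\sqrt{\textstyle\sum_{k=1}^n\phi_k^2}\ge\sqrt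 n\,x\Big)=O\big(\exp\{-c_xn^{\alpha/2}\}\big),\quad n\to\infty.$$
   Context: It is implicitly assumed that $\sum_{k=1}^n\phi_k^2>0$ almost surely, so that $\theta_n$ is well defined. *)

theory Defs
  imports "HOL-Probability.Probability" "HOL-Library.Landau_Symbols"
begin

definition nat_filtration :: "'a measure \<Rightarrow> (nat \<Rightarrow> 'a \<Rightarrow> real) \<Rightarrow> nat \<Rightarrow> 'a measure" where
  "nat_filtration M e i =
     sigma (space M) (\<Union>j\<in>{1..<i}. {e j -` A \<inter> space M | A. A \<in> sets borel})"

definition lse :: "(nat \<Rightarrow> 'a \<Rightarrow> real) \<Rightarrow> (nat \<Rightarrow> 'a \<Rightarrow> real) \<Rightarrow> nat \<Rightarrow> 'a \<Rightarrow> real" where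
  "lse phi X n w = (\<Sum>k=1..n. phi k w * X k w) / (\<Sum>k=1..n. (phi k w)\<^sup>2)"

end

theory Submission
  imports Defs
begin

text \<open>Conditionally on the regressors, which are independent of the noise, the normalised error
  \<open>(\<theta>\<^sub>n - \<theta>) \<surd>(\<Sum> \<phi>\<^sub>k\<^sup>2)\<close> is a weighted sum \<open>\<Sum> a\<^sub>k \<epsilon>\<^sub>k\<close> of the martingale differences with
  \<open>\<Sum> a\<^sub>k\<^sup>2 = 1\<close>. Truncating every summand at a level \<open>y\<close>, the conditional exponential moments
  given \<open>\<epsilon>\<^sub>1, \<dots>, \<epsilon>\<^sub>k\<^sub>-\<^sub>1\<close> satisfy
  \<open>E[exp (\<lambda> min (a\<^sub>k \<epsilon>\<^sub>k) y) | \<dots>] \<le> 1 + \<lambda>\<^sup>2 a\<^sub>k\<^sup>2 u / 2\<close> as long as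
  \<open>\<lambda> y\<^sup>1\<^sup>-\<^sup>\<alpha> \<le> 1\<close>, so Markov's inequality bounds the tail of the truncated sum by
  \<open>exp (- \<lambda> x + \<lambda>\<^sup>2 u / 2)\<close>, while the event that some summand exceeds \<open>y\<close> has probability at
  most \<open>u / (y\<^sup>2 exp (y\<^sup>\<alpha>))\<close>. Taking \<open>y = x\<close> and \<open>\<lambda> = x / u\<close> for small \<open>x\<close>, resp.
  \<open>\<lambda> = x\<^sup>\<alpha>\<^sup>-\<^sup>1\<close> for large \<open>x\<close>, gives the two regimes of the bound.\<close>

lemma exp_le_quadratic_remainder:
  fixes t :: real
  shows "exp t \<le> 1 + t + t\<^sup>2 / 2 * exp (max t 0)"
proof (cases "t = 0")
  case True then show ?thesis by simp
next
  case False
  show ?thesis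
  proof (cases "t > 0")
    case True
    from Maclaurin2[of t "\<lambda>_. exp" exp 2] True
    obtain s where s: "0 < s" "s \<le> t" "exp t = (\<Sum>m<2. exp 0 / fact m * t ^ m) + exp s / fact 2 * t ^ 2"
      by (auto intro: DERIV_exp)
    have "exp s / 2 * t\<^sup>2 \<le> exp t / 2 * t\<^sup>2" using s(2) by (intro mult_right_mono) auto
    then show ?thesis using s True by (simp add: numeral_2_eq_2 power2_eq_square max_def)
  next
    case False
    with \<open>t \<noteq> 0\<close> have "t < 0" by simp
    from Maclaurin_minus[of t 2 "\<lambda>_. exp" exp] this
    obtain s where s: "t < s" "s < 0" "exp t = (\<Sum>m<2. exp 0 / fact m * t ^ m) + exp s / fact 2 * t ^ 2"
      by (auto intro: DERIV_exp)
    have "exp s / 2 * t\<^sup>2 \<le> 1 / 2 * t\<^sup>2" using s(2) by (intro mult_right_mono) auto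
    then show ?thesis using s \<open>t < 0\<close> by (simp add: numeral_2_eq_2 power2_eq_square max_def)
  qed
qed

lemma mult_le_abs_if_abs_le_one:
  fixes a e :: real
  assumes "\<bar>a\<bar> \<le> 1"
  shows "a * e \<le> \<bar>e\<bar>"
proof -
  have "a * e \<le> \<bar>a\<bar> * \<bar>e\<bar>" by (simp add: abs_mult[symmetric])
  also have "\<dots> \<le> \<bar>e\<bar>" using assms by (simp add: mult_left_le_one_le)
  finally show ?thesis .
qed

lemma exp_truncated_le_quadratic:
  fixes \<alpha> l y a e :: real
  assumes \<alpha>: "0 < \<alpha>" "\<alpha> < 1" and l: "0 < l" and y: "0 < y"
    and ly: "l * y powr (1 - \<alpha>) \<le> 1" and a: "\<bar>a\<bar> \<le> 1"
  shows "exp (l * min (a * e) y) \<le> 1 + l * (a * e) + l\<^sup>2 * a\<^sup>2 / 2 * (e\<^sup>2 * exp (\<bar>e\<bar> powr \<alpha>))"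
proof -
  define z where "z = min (a * e) y"
  have z_le: "z \<le> a * e" unfolding z_def by simp
  have remainder: "(l * z)\<^sup>2 * exp (max (l * z) 0) \<le> l\<^sup>2 * a\<^sup>2 * (e\<^sup>2 * exp (\<bar>e\<bar> powr \<alpha>))"
  proof (cases "z \<le> 0")
    case True
    then have "z = a * e" unfolding z_def using y by (auto simp: min_def split: if_splits)
    moreover have "max (l * z) 0 = 0" using True l by (simp add: mult_nonneg_nonpos max_def)
    moreover have "e\<^sup>2 \<le> e\<^sup>2 * exp (\<bar>e\<bar> powr \<alpha>)"
      using mult_left_mono[of 1 "exp (\<bar>e\<bar> powr \<alpha>)" "e\<^sup>2"] by simp
    ultimately show ?thesis
      using mult_left_mono[of "e\<^sup>2" _ "l\<^sup>2 * a\<^sup>2"] by (simp add: power_mult_distrib mult.assoc)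
  next
    case False
    then have z0: "0 < z" by simp
    \<comment> \<open>truncation at \<open>y\<close> is what keeps the exponent \<open>l z\<close> below \<open>|e|\<^sup>\<alpha>\<close>\<close>
    have "l * z = l * (z powr (1 - \<alpha>) * z powr \<alpha>)" using z0 by (simp add: powr_add[symmetric])
    also have "\<dots> \<le> l * (y powr (1 - \<alpha>) * z powr \<alpha>)"
      using z0 \<alpha> l by (intro mult_left_mono mult_right_mono powr_mono2) (auto simp: z_def)
    also have "\<dots> \<le> z powr \<alpha>" using mult_right_mono[OF ly, of "z powr \<alpha>"] by (simp add: mult.assoc)
    also have "\<dots> \<le> \<bar>e\<bar> powr \<alpha>"
      using z_le mult_le_abs_if_abs_le_one[OF a, of e] z0 \<alpha> by (intro powr_mono2) auto
    finally have "exp (max (l * z) 0) \<le> exp (\<bar>e\<bar> powr \<alpha>)" by simp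
    moreover have "(l * z)\<^sup>2 \<le> l\<^sup>2 * a\<^sup>2 * e\<^sup>2"
      using z0 z_le l by (simp add: power_mult_distrib[symmetric] power_mono)
    ultimately show ?thesis by (simp add: mult.assoc[symmetric] mult_mono)
  qed
  have linear: "l * z \<le> l * (a * e)" using z_le l by (simp add: mult_left_mono)
  have "exp (l * z) \<le> 1 + l * z + (l * z)\<^sup>2 / 2 * exp (max (l * z) 0)"
    by (rule exp_le_quadratic_remainder)
  also have "\<dots> \<le> 1 + l * (a * e) + l\<^sup>2 * a\<^sup>2 / 2 * (e\<^sup>2 * exp (\<bar>e\<bar> powr \<alpha>))"
    using linear remainder by (simp add: add_mono)
  finally show ?thesis unfolding z_def .
qed

lemma truncation_level_le_moment_weight:
  fixes \<alpha> y a e :: real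
  assumes y: "0 < y" and \<alpha>: "0 < \<alpha>" and a: "\<bar>a\<bar> \<le> 1" and ye: "y < a * e"
  shows "y\<^sup>2 * exp (y powr \<alpha>) \<le> a\<^sup>2 * (e\<^sup>2 * exp (\<bar>e\<bar> powr \<alpha>))"
proof -
  have "y \<le> \<bar>e\<bar>" using ye mult_le_abs_if_abs_le_one[OF a, of e] by simp
  then have "exp (y powr \<alpha>) \<le> exp (\<bar>e\<bar> powr \<alpha>)" using y \<alpha> by (simp add: powr_mono2)
  moreover have "y\<^sup>2 \<le> a\<^sup>2 * e\<^sup>2" using y ye by (simp add: power_mult_distrib[symmetric] power_mono)
  ultimately show ?thesis by (simp add: mult.assoc[symmetric] mult_mono)
qed

lemma less_powr_inverse_iff:
  fixes x u p :: real
  assumes "0 < p" "0 < x" "0 < u"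
  shows "x < u powr (1 / p) \<longleftrightarrow> x powr p < u"
proof -
  have "x < v \<longleftrightarrow> x powr p < v powr p" if "0 \<le> v" for v
    using assms that by (meson not_less powr_less_mono2 powr_mono2 less_imp_le)
  then have "x < u powr (1 / p) \<longleftrightarrow> x powr p < (u powr (1 / p)) powr p" by simp
  also have "(u powr (1 / p)) powr p = u" using assms by (simp add: powr_powr)
  finally show ?thesis .
qed

lemma space_nat_filtration [simp]: "space (nat_filtration M e i) = space M"
  unfolding nat_filtration_def by (rule space_measure_of) auto

lemma sets_nat_filtration:
  "sets (nat_filtration M e i) =
     sigma_sets (space M) (\<Union>j\<in>{1..<i}. {e j -` A \<inter> space M | A. A \<in> sets borel})"
  unfolding nat_filtration_def by (rule sets_measure_of) auto

lemma subalgebra_nat_filtration: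
  assumes "\<And>k. e k \<in> borel_measurable M"
  shows "subalgebra M (nat_filtration M e i)"
  unfolding subalgebra_def sets_nat_filtration
  using assms by (auto intro!: sets.sigma_sets_subset measurable_sets)

lemma nat_filtration_measurable:
  assumes "1 \<le> j" "j < i"
  shows "e j \<in> borel_measurable (nat_filtration M e i)"
proof (rule measurableI)
  fix A :: "real set" assume "A \<in> sets borel"
  then show "e j -` A \<inter> space (nat_filtration M e i) \<in> sets (nat_filtration M e i)"
    unfolding space_nat_filtration sets_nat_filtration using assms
    by (intro sigma_sets.Basic) (auto intro!: bexI[of _ j])
qed auto

context prob_space
begin

lemma integral_mult_le_if_nn_cond_exp_le:
  fixes F :: "'a measure" and W Z :: "'a \<Rightarrow> real"
  assumes subalg: "subalgebra M F"
    and W [measurable]: "W \<in> borel_measurable M" and W_nonneg: "\<And>w. 0 \<le> W w"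
    and cond: "AE w in M. nn_cond_exp M F (\<lambda>w. ennreal (W w)) w \<le> ennreal u" and u: "0 \<le> u"
    and Z: "Z \<in> borel_measurable F" and Z_nonneg: "\<And>w. 0 \<le> Z w" and Z_bounded: "\<And>w. Z w \<le> B"
  shows "integrable M (\<lambda>w. Z w * W w)" and "(\<integral>w. Z w * W w \<partial>M) \<le> (\<integral>w. Z w \<partial>M) * u"
proof -
  interpret S: sigma_finite_subalgebra M F
    by (intro finite_measure_subalgebra_is_sigma_finite) (unfold_locales, rule subalg)
  have [measurable]: "Z \<in> borel_measurable M" using measurable_from_subalg[OF subalg Z] .
  have Z_integrable: "integrable M Z"
    by (rule integrable_const_bound[where B=B]) (use Z_nonneg Z_bounded in auto)
  have "(\<integral>\<^sup>+w. ennreal (Z w * W w) \<partial>M) = (\<integral>\<^sup>+w. ennreal (Z w) * ennreal (W w) \<partial>M)"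
    using Z_nonneg W_nonneg by (simp add: ennreal_mult)
  also have "\<dots> = (\<integral>\<^sup>+w. ennreal (Z w) * nn_cond_exp M F (\<lambda>w. ennreal (W w)) w \<partial>M)"
    by (rule S.nn_cond_exp_intg[symmetric]) (use Z in auto)
  also have "\<dots> \<le> (\<integral>\<^sup>+w. ennreal (Z w) * ennreal u \<partial>M)"
    by (rule nn_integral_mono_AE) (use cond in \<open>auto elim!: eventually_mono intro: mult_left_mono\<close>)
  also have "\<dots> = ennreal (\<integral>w. Z w * u \<partial>M)"
    using Z_nonneg u Z_integrable by (simp add: ennreal_mult[symmetric] nn_integral_eq_integral)
  finally have bound: "(\<integral>\<^sup>+w. ennreal (Z w * W w) \<partial>M) \<le> ennreal (\<integral>w. Z w * u \<partial>M)" .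
  show integrable: "integrable M (\<lambda>w. Z w * W w)"
    by (rule integrableI_nonneg)
       (use bound Z_nonneg W_nonneg in \<open>auto simp: le_less_trans\<close>)
  have "ennreal (\<integral>w. Z w * W w \<partial>M) \<le> ennreal (\<integral>w. Z w * u \<partial>M)"
    using bound Z_nonneg W_nonneg by (subst nn_integral_eq_integral[symmetric]) (auto simp: integrable)
  then show "(\<integral>w. Z w * W w \<partial>M) \<le> (\<integral>w. Z w \<partial>M) * u"
    using Z_nonneg u by (simp add: ennreal_le_iff integral_nonneg)
qed

lemma integral_mult_eq_0_if_real_cond_exp_eq_0:
  fixes F :: "'a measure" and e Z :: "'a \<Rightarrow> real"
  assumes subalg: "subalgebra M F" and e: "integrable M e"
    and cond: "AE w in M. real_cond_exp M F e w = 0"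
    and Z: "Z \<in> borel_measurable F" and Z_bounded: "\<And>w. \<bar>Z w\<bar> \<le> B"
  shows "integrable M (\<lambda>w. Z w * e w)" and "(\<integral>w. Z w * e w \<partial>M) = 0"
proof -
  interpret S: sigma_finite_subalgebra M F
    by (intro finite_measure_subalgebra_is_sigma_finite) (unfold_locales, rule subalg)
  have [measurable]: "Z \<in> borel_measurable M" using measurable_from_subalg[OF subalg Z] .
  show integrable: "integrable M (\<lambda>w. Z w * e w)"
  proof (rule Bochner_Integration.integrable_bound[where f="\<lambda>w. B * e w"])
    show "AE w in M. norm (Z w * e w) \<le> norm (B * e w)"
      using Z_bounded by (auto simp: abs_mult intro!: AE_I2 mult_right_mono intro: order_trans[OF _ abs_ge_self])
  qed (use e in auto)
  have "(\<integral>w. Z w * e w \<partial>M) = (\<integral>w. Z w * real_cond_exp M F e w \<partial>M)"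
    using integrable e by (intro S.real_cond_exp_intg(2)[symmetric]) (auto simp: Z)
  also have "\<dots> = 0"
    using cond by (subst integral_cong_AE[where g="\<lambda>_. 0"]) auto
  finally show "(\<integral>w. Z w * e w \<partial>M) = 0" .
qed

lemma integral_mult_exp_truncated_le:
  fixes F :: "'a measure" and e Z :: "'a \<Rightarrow> real"
  assumes subalg: "subalgebra M F"
    and e [measurable]: "e \<in> borel_measurable M" and e_integrable: "integrable M e"
    and martingale_difference: "AE w in M. real_cond_exp M F e w = 0"
    and moment: "AE w in M. nn_cond_exp M F (\<lambda>w. ennreal ((e w)\<^sup>2 * exp (\<bar>e w\<bar> powr \<alpha>))) w \<le> ennreal u"
    and u: "0 \<le> u"
    and Z: "Z \<in> borel_measurable F" and Z_nonneg: "\<And>w. 0 \<le> Z w" and Z_bounded: "\<And>w. Z w \<le> B"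
    and \<alpha>: "0 < \<alpha>" "\<alpha> < 1" and l: "0 < l" and y: "0 < y"
    and ly: "l * y powr (1 - \<alpha>) \<le> 1" and a: "\<bar>a\<bar> \<le> 1"
  shows "(\<integral>w. Z w * exp (l * min (a * e w) y) \<partial>M) \<le> (\<integral>w. Z w \<partial>M) * (1 + l\<^sup>2 * a\<^sup>2 * u / 2)"
proof -
  have [measurable]: "Z \<in> borel_measurable M" using measurable_from_subalg[OF subalg Z] .
  define W where "W w = (e w)\<^sup>2 * exp (\<bar>e w\<bar> powr \<alpha>)" for w
  have W_integral: "integrable M (\<lambda>w. Z w * W w)" "(\<integral>w. Z w * W w \<partial>M) \<le> (\<integral>w. Z w \<partial>M) * u"
    using integral_mult_le_if_nn_cond_exp_le[OF subalg _ _ moment u Z Z_nonneg Z_bounded]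
    unfolding W_def by auto
  have Z_abs_bounded: "\<bar>Z w\<bar> \<le> B" for w using Z_nonneg Z_bounded by (simp add: abs_of_nonneg)
  note e_integral = integral_mult_eq_0_if_real_cond_exp_eq_0[OF subalg e_integrable martingale_difference Z Z_abs_bounded]
  have Z_integrable: "integrable M Z"
    by (rule integrable_const_bound[where B=B]) (use Z_nonneg Z_bounded in auto)
  have "(\<integral>w. Z w * exp (l * min (a * e w) y) \<partial>M) \<le>
        (\<integral>w. Z w + (l * a) * (Z w * e w) + (l\<^sup>2 * a\<^sup>2 / 2) * (Z w * W w) \<partial>M)"
  proof (rule integral_mono)
    show "integrable M (\<lambda>w. Z w * exp (l * min (a * e w) y))"
    proof (rule integrable_const_bound[where B="B * exp (l * y)"])
      show "AE w in M. norm (Z w * exp (l * min (a * e w) y)) \<le> B * exp (l * y)"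
      proof (intro AE_I2)
        fix w
        have "exp (l * min (a * e w) y) \<le> exp (l * y)" using l by (simp add: mult_left_mono)
        then show "norm (Z w * exp (l * min (a * e w) y)) \<le> B * exp (l * y)"
          using Z_nonneg[of w] Z_bounded[of w] by (simp add: abs_mult mult_mono)
      qed
    qed simp
    show "Z w * exp (l * min (a * e w) y) \<le> Z w + (l * a) * (Z w * e w) + (l\<^sup>2 * a\<^sup>2 / 2) * (Z w * W w)"
      for w
      using mult_left_mono[OF exp_truncated_le_quadratic[OF \<alpha> l y ly a, of "e w"] Z_nonneg[of w]]
      by (simp add: W_def algebra_simps)
  qed (use Z_integrable e_integral W_integral in auto)
  also have "\<dots> = (\<integral>w. Z w \<partial>M) + (l\<^sup>2 * a\<^sup>2 / 2) * (\<integral>w. Z w * W w \<partial>M)"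
    using Z_integrable W_integral e_integral by simp
  also have "\<dots> \<le> (\<integral>w. Z w \<partial>M) * (1 + l\<^sup>2 * a\<^sup>2 * u / 2)"
    using mult_left_mono[OF W_integral(2), of "l\<^sup>2 * a\<^sup>2 / 2"] by (simp add: algebra_simps)
  finally show ?thesis .
qed

end

lemma abs_le_one_if_sum_power2_le_one:
  fixes a :: "nat \<Rightarrow> real"
  assumes "(\<Sum>k\<in>K. (a k)\<^sup>2) \<le> 1" and "finite K" and "k \<in> K"
  shows "\<bar>a k\<bar> \<le> 1"
proof -
  have "(a k)\<^sup>2 \<le> (\<Sum>k\<in>K. (a k)\<^sup>2)" using assms(2,3) by (intro member_le_sum) auto
  then show ?thesis using assms(1) abs_square_le_1 by fastforce
qed

lemma (in prob_space) measure_indep_var_le_if_sections_le: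
  assumes indep: "indep_var N X N' Y" and Q: "Q \<in> sets (N \<Otimes>\<^sub>M N')" and b: "0 \<le> b"
    and sections: "\<And>c. c \<in> space N \<Longrightarrow> measure M {w \<in> space M. (c, Y w) \<in> Q} \<le> b"
  shows "measure M {w \<in> space M. (X w, Y w) \<in> Q} \<le> b"
proof -
  have [measurable]: "X \<in> measurable M N" "Y \<in> measurable M N'"
    and joint: "distr M N X \<Otimes>\<^sub>M distr M N' Y = distr M (N \<Otimes>\<^sub>M N') (\<lambda>w. (X w, Y w))"
    using indep unfolding indep_var_distribution_eq by auto
  interpret PX: prob_space "distr M N X" by (rule prob_space_distr) simp
  interpret PY: prob_space "distr M N' Y" by (rule prob_space_distr) simp
  have "emeasure M {w \<in> space M. (X w, Y w) \<in> Q} = emeasure (distr M N X \<Otimes>\<^sub>M distr M N' Y) Q"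
    using Q unfolding joint by (subst emeasure_distr) (auto intro!: arg_cong[where f="emeasure M"])
  also have "\<dots> = (\<integral>\<^sup>+c. emeasure (distr M N' Y) (Pair c -` Q) \<partial>distr M N X)"
    using Q by (intro PY.emeasure_pair_measure_alt) simp
  also have "\<dots> \<le> (\<integral>\<^sup>+c. ennreal b \<partial>distr M N X)"
  proof (rule nn_integral_mono)
    fix c assume "c \<in> space (distr M N X)"
    then have c: "c \<in> space N" by simp
    have "emeasure (distr M N' Y) (Pair c -` Q) = emeasure M {w \<in> space M. (c, Y w) \<in> Q}"
      using Q by (subst emeasure_distr) (auto intro!: arg_cong[where f="emeasure M"])
    also have "\<dots> \<le> ennreal b"
      using sections[OF c] by (simp add: emeasure_eq_measure ennreal_leI)
    finally show "emeasure (distr M N' Y) (Pair c -` Q) \<le> ennreal b" .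
  qed
  also have "\<dots> = ennreal b" using PX.emeasure_space_1 by simp
  finally show ?thesis using b by (simp add: emeasure_eq_measure)
qed

lemma lse_error_mult_sqrt:
  fixes phi eps X :: "nat \<Rightarrow> 'a \<Rightarrow> real"
  assumes model: "\<And>k. X k w = \<theta> * phi k w + eps k w"
  shows "(lse phi X n w - \<theta>) * sqrt (\<Sum>k=1..n. (phi k w)\<^sup>2)
    = (\<Sum>k=1..n. phi k w * eps k w) / sqrt (\<Sum>k=1..n. (phi k w)\<^sup>2)"
proof -
  define S where "S = (\<Sum>k=1..n. (phi k w)\<^sup>2)"
  have "(\<Sum>k=1..n. phi k w * X k w) = \<theta> * S + (\<Sum>k=1..n. phi k w * eps k w)"
    by (simp add: S_def model algebra_simps power2_eq_square sum.distrib sum_distrib_left)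
  moreover have "0 \<le> S" by (simp add: S_def sum_nonneg)
  ultimately show ?thesis
    unfolding lse_def S_def[symmetric]
    by (cases "S = 0") (simp_all add: field_simps real_sqrt_mult[symmetric])
qed

definition subexp_tail :: "real \<Rightarrow> real \<Rightarrow> real \<Rightarrow> real" where
  "subexp_tail \<alpha> u x =
     (if x < u powr (1 / (2 - \<alpha>)) then 2 * exp (- (x\<^sup>2 / (2 * u)))
      else 2 * exp (- (1/2) * x powr \<alpha>))"

locale martingale_diff_exp_moment = prob_space +
  fixes eps :: "nat \<Rightarrow> 'a \<Rightarrow> real" and \<alpha> u :: real
  assumes eps_measurable [measurable]: "\<And>k. eps k \<in> borel_measurable M"
    and eps_integrable: "\<And>i. 1 \<le> i \<Longrightarrow> integrable M (eps i)"
    and martingale_difference: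
      "\<And>i. 1 \<le> i \<Longrightarrow> AE w in M. real_cond_exp M (nat_filtration M eps i) (eps i) w = 0"
    and cond_moment: "\<And>i. 1 \<le> i \<Longrightarrow> AE w in M. nn_cond_exp M (nat_filtration M eps i)
          (\<lambda>w. ennreal ((eps i w)\<^sup>2 * exp (\<bar>eps i w\<bar> powr \<alpha>))) w \<le> ennreal u"
    and alpha_pos: "0 < \<alpha>" and alpha_less_one: "\<alpha> < 1" and one_le_u: "1 \<le> u"
begin

lemma moment_weight_integral:
  assumes "1 \<le> i"
  shows "integrable M (\<lambda>w. (eps i w)\<^sup>2 * exp (\<bar>eps i w\<bar> powr \<alpha>))"
    and "(\<integral>w. (eps i w)\<^sup>2 * exp (\<bar>eps i w\<bar> powr \<alpha>) \<partial>M) \<le> u"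
  using integral_mult_le_if_nn_cond_exp_le[OF subalgebra_nat_filtration[OF eps_measurable] _ _
      cond_moment[OF assms], of "\<lambda>_. 1" 1] one_le_u
  by (auto simp: prob_space)

lemma integral_prod_exp_truncated_le:
  assumes l: "0 < l" and y: "0 < y" and ly: "l * y powr (1 - \<alpha>) \<le> 1"
    and a: "\<And>k. k \<in> {1..n} \<Longrightarrow> \<bar>a k\<bar> \<le> 1"
  shows "(\<integral>w. (\<Prod>k=1..n. exp (l * min (a k * eps k w) y)) \<partial>M) \<le> (\<Prod>k=1..n. 1 + l\<^sup>2 * (a k)\<^sup>2 * u / 2)"
  using a
proof (induction n)
  case 0
  then show ?case by (simp add: prob_space)
next
  case (Suc n)
  define Z where "Z w = (\<Prod>k=1..n. exp (l * min (a k * eps k w) y))" for w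
  have Z: "Z \<in> borel_measurable (nat_filtration M eps (Suc n))"
    unfolding Z_def
  proof (intro borel_measurable_prod)
    fix k assume "k \<in> {1..n}"
    then have [measurable]: "eps k \<in> borel_measurable (nat_filtration M eps (Suc n))"
      by (intro nat_filtration_measurable) auto
    show "(\<lambda>w. exp (l * min (a k * eps k w) y)) \<in> borel_measurable (nat_filtration M eps (Suc n))"
      by measurable
  qed
  have Z_bounded: "Z w \<le> exp (l * y) ^ n" for w
    using prod_mono[of "{1..n}" "\<lambda>k. exp (l * min (a k * eps k w) y)" "\<lambda>_. exp (l * y)"] l
    by (simp add: Z_def mult_left_mono)
  have i: "1 \<le> Suc n" by simp
  have "(\<integral>w. (\<Prod>k=1..Suc n. exp (l * min (a k * eps k w) y)) \<partial>M)
      = (\<integral>w. Z w * exp (l * min (a (Suc n) * eps (Suc n) w) y) \<partial>M)"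
    by (simp add: Z_def prod.nat_ivl_Suc')
  also have "\<dots> \<le> (\<integral>w. Z w \<partial>M) * (1 + l\<^sup>2 * (a (Suc n))\<^sup>2 * u / 2)"
    using Suc.prems one_le_u
    by (intro integral_mult_exp_truncated_le[OF subalgebra_nat_filtration eps_measurable
          eps_integrable[OF i] martingale_difference[OF i] cond_moment[OF i] _ Z _ Z_bounded
          alpha_pos alpha_less_one l y ly])
       (auto simp: Z_def prod_nonneg)
  also have "\<dots> \<le> (\<Prod>k=1..n. 1 + l\<^sup>2 * (a k)\<^sup>2 * u / 2) * (1 + l\<^sup>2 * (a (Suc n))\<^sup>2 * u / 2)"
    using Suc one_le_u by (intro mult_right_mono) (auto simp: Z_def)
  also have "\<dots> = (\<Prod>k=1..Suc n. 1 + l\<^sup>2 * (a k)\<^sup>2 * u / 2)"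
    by (simp add: prod.nat_ivl_Suc')
  finally show ?case .
qed

lemma measure_prod_exp_truncated_ge_le:
  assumes l: "0 < l" and y: "0 < y" and ly: "l * y powr (1 - \<alpha>) \<le> 1"
    and a: "(\<Sum>k=1..n. (a k)\<^sup>2) \<le> 1"
  shows "measure M {w \<in> space M. exp (l * x) \<le> (\<Prod>k=1..n. exp (l * min (a k * eps k w) y))}
    \<le> exp (- (l * x) + l\<^sup>2 * u / 2)"
proof -
  define P where "P w = (\<Prod>k=1..n. exp (l * min (a k * eps k w) y))" for w
  have P_integrable: "integrable M P"
  proof (rule integrable_const_bound[where B="exp (l * y) ^ n"])
    show "AE w in M. norm (P w) \<le> exp (l * y) ^ n"
      using prod_mono[of "{1..n}" "\<lambda>k. exp (l * min (a k * eps k _) y)" "\<lambda>_. exp (l * y)"] l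
      by (auto simp: P_def prod_nonneg mult_left_mono)
  qed (unfold P_def, measurable)
  have "measure M {w \<in> space M. exp (l * x) \<le> P w} \<le> (\<integral>w. P w \<partial>M) / exp (l * x)"
    by (rule integral_Markov_inequality_measure[OF P_integrable, where A="space M"])
       (auto simp: P_def prod_nonneg)
  also have "(\<integral>w. P w \<partial>M) \<le> (\<Prod>k=1..n. 1 + l\<^sup>2 * (a k)\<^sup>2 * u / 2)"
    unfolding P_def using abs_le_one_if_sum_power2_le_one[OF a]
    by (intro integral_prod_exp_truncated_le[OF l y ly]) auto
  also have "\<dots> \<le> (\<Prod>k=1..n. exp (l\<^sup>2 * (a k)\<^sup>2 * u / 2))"
    using one_le_u by (intro prod_mono) auto
  also have "\<dots> = exp (l\<^sup>2 * u / 2 * (\<Sum>k=1..n. (a k)\<^sup>2))"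
    by (simp add: exp_sum[symmetric] sum_distrib_left algebra_simps)
  also have "\<dots> \<le> exp (l\<^sup>2 * u / 2)"
    using a one_le_u by (simp add: mult_left_le)
  finally show ?thesis
    by (simp add: P_def exp_diff[symmetric] divide_right_mono)
qed

lemma measure_moment_weight_ge_le:
  assumes k: "1 \<le> k" and c: "0 < c" and b: "0 \<le> b"
  shows "measure M {w \<in> space M. c \<le> b * ((eps k w)\<^sup>2 * exp (\<bar>eps k w\<bar> powr \<alpha>))} \<le> b * u / c"
proof -
  note moment = moment_weight_integral[OF k]
  have "measure M {w \<in> space M. c \<le> b * ((eps k w)\<^sup>2 * exp (\<bar>eps k w\<bar> powr \<alpha>))}
      \<le> (\<integral>w. b * ((eps k w)\<^sup>2 * exp (\<bar>eps k w\<bar> powr \<alpha>)) \<partial>M) / c"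
    using moment(1) c b by (intro integral_Markov_inequality_measure[where A="space M"]) auto
  also have "\<dots> \<le> b * u / c"
    using moment(2) c b by (simp add: divide_right_mono mult_left_mono)
  finally show ?thesis .
qed

lemma weighted_sum_tail_le:
  assumes l: "0 < l" and y: "0 < y" and ly: "l * y powr (1 - \<alpha>) \<le> 1"
    and a: "(\<Sum>k=1..n. (a k)\<^sup>2) \<le> 1"
  shows "measure M {w \<in> space M. x \<le> (\<Sum>k=1..n. a k * eps k w)}
    \<le> exp (- (l * x) + l\<^sup>2 * u / 2) + u / (y\<^sup>2 * exp (y powr \<alpha>))"
proof -
  define c where "c = y\<^sup>2 * exp (y powr \<alpha>)"
  have c: "0 < c" using y by (simp add: c_def)
  define A where "A = {w \<in> space M. exp (l * x) \<le> (\<Prod>k=1..n. exp (l * min (a k * eps k w) y))}"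
  define B where "B k = {w \<in> space M. c \<le> (a k)\<^sup>2 * ((eps k w)\<^sup>2 * exp (\<bar>eps k w\<bar> powr \<alpha>))}" for k
  have [measurable]: "A \<in> sets M" "B k \<in> sets M" for k unfolding A_def B_def by measurable
  have "{w \<in> space M. x \<le> (\<Sum>k=1..n. a k * eps k w)} \<subseteq> A \<union> (\<Union>k\<in>{1..n}. B k)"
  proof
    fix w assume w: "w \<in> {w \<in> space M. x \<le> (\<Sum>k=1..n. a k * eps k w)}"
    show "w \<in> A \<union> (\<Union>k\<in>{1..n}. B k)"
    proof (cases "\<exists>k\<in>{1..n}. y < a k * eps k w")
      case True
      then obtain k where k: "k \<in> {1..n}" "y < a k * eps k w" by blast
      have "\<bar>a k\<bar> \<le> 1" using abs_le_one_if_sum_power2_le_one[OF a _ k(1)] by simp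
      then have "w \<in> B k"
        using w truncation_level_le_moment_weight[OF y alpha_pos _ k(2)] by (auto simp: B_def c_def)
      then show ?thesis using k(1) by blast
    next
      case False
      then have "(\<Prod>k=1..n. exp (l * min (a k * eps k w) y)) = exp (l * (\<Sum>k=1..n. a k * eps k w))"
        by (simp add: exp_sum[symmetric] sum_distrib_left min_def not_less)
      then have "w \<in> A" using w l by (simp add: A_def mult_left_mono)
      then show ?thesis by blast
    qed
  qed
  then have "measure M {w \<in> space M. x \<le> (\<Sum>k=1..n. a k * eps k w)}
      \<le> measure M (A \<union> (\<Union>k\<in>{1..n}. B k))"
    by (intro finite_measure_mono) auto
  also have "\<dots> \<le> measure M A + (\<Sum>k=1..n. measure M (B k))"
    by (intro order_trans[OF measure_Un_le] add_left_mono finite_measure_subadditive_finite) auto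
  also have "(\<Sum>k=1..n. measure M (B k)) \<le> (\<Sum>k=1..n. (a k)\<^sup>2 * u / c)"
    unfolding B_def using c by (intro sum_mono measure_moment_weight_ge_le) auto
  also have "\<dots> = (\<Sum>k=1..n. (a k)\<^sup>2) * u / c"
    by (simp add: sum_divide_distrib sum_distrib_right)
  also have "\<dots> \<le> u / c"
    using a one_le_u c by (simp add: divide_right_mono mult_left_le_one_le)
  finally show ?thesis
    using measure_prod_exp_truncated_ge_le[OF l y ly a, of x] by (simp add: A_def c_def)
qed

lemma weighted_sum_tail_le_gaussian:
  assumes x: "0 < x" and small: "x powr (2 - \<alpha>) < u" and a: "(\<Sum>k=1..n. (a k)\<^sup>2) \<le> 1"
  shows "measure M {w \<in> space M. x \<le> (\<Sum>k=1..n. a k * eps k w)} \<le> 2 * exp (- (x\<^sup>2 / (2 * u)))"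
proof (cases "x\<^sup>2 \<le> u")
  case True
  have "1 / 2 \<le> exp (- (1 / 2) :: real)"
    using exp_ge_add_one_self[of "- (1 / 2)"] by simp
  also have "\<dots> \<le> exp (- (x\<^sup>2 / (2 * u)))"
    using True one_le_u by (simp add: field_simps)
  finally show ?thesis
    using prob_le_1[of "{w \<in> space M. x \<le> (\<Sum>k=1..n. a k * eps k w)}"] by linarith
next
  case False
  have x_squared: "x\<^sup>2 = x powr \<alpha> * x powr (2 - \<alpha>)"
    using powr_add[of x \<alpha> "2 - \<alpha>"] x by simp
  have "x * x powr (1 - \<alpha>) = x powr (2 - \<alpha>)"
    using powr_add[of x 1 "1 - \<alpha>"] x by simp
  then have ly: "x / u * x powr (1 - \<alpha>) \<le> 1"
    using small one_le_u by (simp add: field_simps)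
  have "measure M {w \<in> space M. x \<le> (\<Sum>k=1..n. a k * eps k w)}
      \<le> exp (- (x / u * x) + (x / u)\<^sup>2 * u / 2) + u / (x\<^sup>2 * exp (x powr \<alpha>))"
    using x one_le_u by (intro weighted_sum_tail_le[OF _ x ly a]) auto
  also have "- (x / u * x) + (x / u)\<^sup>2 * u / 2 = - (x\<^sup>2 / (2 * u))"
    using one_le_u by (simp add: field_simps power2_eq_square)
  also have "u / (x\<^sup>2 * exp (x powr \<alpha>)) \<le> exp (- (x powr \<alpha>))"
    using False x by (simp add: exp_minus field_simps)
  also have "\<dots> \<le> exp (- (x\<^sup>2 / (2 * u)))"
  proof -
    have "x\<^sup>2 \<le> u * x powr \<alpha>"
      using x_squared mult_left_mono[OF less_imp_le[OF small], of "x powr \<alpha>"] by (simp add: mult.commute)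
    also have "\<dots> \<le> 2 * u * x powr \<alpha>" using one_le_u by simp
    finally show ?thesis using one_le_u by (simp add: pos_divide_le_eq mult.commute)
  qed
  finally show ?thesis by simp
qed

lemma weighted_sum_tail_le_weibull:
  assumes x: "0 < x" and large: "u \<le> x powr (2 - \<alpha>)" and a: "(\<Sum>k=1..n. (a k)\<^sup>2) \<le> 1"
  shows "measure M {w \<in> space M. x \<le> (\<Sum>k=1..n. a k * eps k w)} \<le> 2 * exp (- (1/2) * x powr \<alpha>)"
proof -
  define l where "l = x powr (\<alpha> - 1)"
  have l: "0 < l" using x by (simp add: l_def)
  have ly: "l * x powr (1 - \<alpha>) \<le> 1"
    using x by (simp add: l_def powr_add[symmetric])
  have lx: "l * x = x powr \<alpha>"
    using powr_add[of x "\<alpha> - 1" 1] x by (simp add: l_def)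
  have "1 \<le> x"
  proof (rule ccontr)
    assume "\<not> 1 \<le> x"
    then have "x powr (2 - \<alpha>) < 1" using powr_less_mono2[of "2 - \<alpha>" x 1] x alpha_less_one by simp
    then show False using large one_le_u by simp
  qed
  then have "u \<le> x\<^sup>2"
    using large alpha_pos powr_mono[of "2 - \<alpha>" 2 x] x by simp
  then have "u / (x\<^sup>2 * exp (x powr \<alpha>)) \<le> exp (- (x powr \<alpha>))"
    using x by (simp add: exp_minus field_simps)
  also have "\<dots> \<le> exp (- (1/2) * x powr \<alpha>)" by simp
  finally have jumps: "u / (x\<^sup>2 * exp (x powr \<alpha>)) \<le> exp (- (1/2) * x powr \<alpha>)" .
  have "l\<^sup>2 * u \<le> l\<^sup>2 * x powr (2 - \<alpha>)" using large by (simp add: mult_left_mono)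
  also have "\<dots> = x powr \<alpha>"
    using x by (simp add: l_def power2_eq_square powr_add[symmetric])
  finally have chernoff: "exp (- (l * x) + l\<^sup>2 * u / 2) \<le> exp (- (1/2) * x powr \<alpha>)"
    using lx by simp
  show ?thesis using weighted_sum_tail_le[OF l x ly a, of x] chernoff jumps by linarith
qed

lemma weighted_sum_tail_le_subexp_tail:
  assumes x: "0 < x" and a: "(\<Sum>k=1..n. (a k)\<^sup>2) \<le> 1"
  shows "measure M {w \<in> space M. x \<le> (\<Sum>k=1..n. a k * eps k w)} \<le> subexp_tail \<alpha> u x"
  using less_powr_inverse_iff[of "2 - \<alpha>" x u] alpha_less_one one_le_u x
    weighted_sum_tail_le_gaussian[OF x _ a] weighted_sum_tail_le_weibull[OF x _ a]
  by (auto simp: subexp_tail_def)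

lemma lse_error_tail_le:
  fixes phi X :: "nat \<Rightarrow> 'a \<Rightarrow> real" and \<theta> s x :: real
  assumes model: "\<And>k w. X k w = \<theta> * phi k w + eps k w"
    and indep: "indep_var (Pi\<^sub>M {1..} (\<lambda>_. borel)) (\<lambda>w. \<lambda>k\<in>{1..}. phi k w)
          (Pi\<^sub>M {1..} (\<lambda>_. borel)) (\<lambda>w. \<lambda>k\<in>{1..}. eps k w)"
    and s: "\<bar>s\<bar> = 1" and x: "0 < x"
  shows "measure M {w \<in> space M. x \<le> s * (lse phi X n w - \<theta>) * sqrt (\<Sum>k=1..n. (phi k w)\<^sup>2)}
    \<le> subexp_tail \<alpha> u x"
proof -
  define N where "N = (Pi\<^sub>M {1..} (\<lambda>_. borel) :: (nat \<Rightarrow> real) measure)"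
  define Phi where "Phi = (\<lambda>w. \<lambda>k\<in>{1..}. phi k w)"
  define Eps where "Eps = (\<lambda>w. \<lambda>k\<in>{1..}. eps k w)"
  define g where "g p = s * (\<Sum>k=1..n. fst p k * snd p k) / sqrt (\<Sum>k=1..n. (fst p k)\<^sup>2)"
    for p :: "(nat \<Rightarrow> real) \<times> (nat \<Rightarrow> real)"
  have component: "(\<lambda>c. c k) \<in> borel_measurable N" if "k \<in> {1..n}" for k
    unfolding N_def using that by (intro measurable_component_singleton) auto
  have [measurable]: "g \<in> borel_measurable (N \<Otimes>\<^sub>M N)"
    unfolding g_def using measurable_compose[OF measurable_fst component]
      measurable_compose[OF measurable_snd component]
    by (intro borel_measurable_times borel_measurable_divide borel_measurable_sum
        borel_measurable_sqrt borel_measurable_power) auto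
  define Q where "Q = {p \<in> space (N \<Otimes>\<^sub>M N). x \<le> g p}"
  have Q: "Q \<in> sets (N \<Otimes>\<^sub>M N)" unfolding Q_def by measurable
  have "Phi \<in> measurable M N" "Eps \<in> measurable M N"
    using indep_var_rv1[OF indep] indep_var_rv2[OF indep] by (simp_all add: Phi_def Eps_def N_def)
  then have space: "(Phi w, Eps w) \<in> space (N \<Otimes>\<^sub>M N)" if "w \<in> space M" for w
    using that by (simp add: space_pair_measure measurable_space)
  have "s * (lse phi X n w - \<theta>) * sqrt (\<Sum>k=1..n. (phi k w)\<^sup>2) = g (Phi w, Eps w)" for w
  proof -
    have "g (Phi w, Eps w) = s * (\<Sum>k=1..n. phi k w * eps k w) / sqrt (\<Sum>k=1..n. (phi k w)\<^sup>2)"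
      unfolding g_def Phi_def Eps_def by (intro arg_cong2[where f="\<lambda>a b. s * a / sqrt b"] sum.cong) auto
    then show ?thesis
      unfolding mult.assoc lse_error_mult_sqrt[where X=X and phi=phi and eps=eps, OF model] by simp
  qed
  then have "{w \<in> space M. x \<le> s * (lse phi X n w - \<theta>) * sqrt (\<Sum>k=1..n. (phi k w)\<^sup>2)}
      = {w \<in> space M. (Phi w, Eps w) \<in> Q}"
    using space by (auto simp: Q_def)
  also have "measure M \<dots> \<le> subexp_tail \<alpha> u x"
  proof (rule measure_indep_var_le_if_sections_le[OF indep[folded N_def Phi_def Eps_def] Q])
    show "0 \<le> subexp_tail \<alpha> u x" by (simp add: subexp_tail_def)
    fix c assume c: "c \<in> space N"
    define S where "S = (\<Sum>k=1..n. (c k)\<^sup>2)"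
    define a where "a k = s * c k / sqrt S" for k
    have events: "{w \<in> space M. (c, Eps w) \<in> Q} \<subseteq> {w \<in> space M. x \<le> (\<Sum>k=1..n. a k * eps k w)}"
      using c space by (auto simp: Q_def g_def a_def S_def Eps_def sum_divide_distrib sum_distrib_left mult.assoc)
    have a: "(\<Sum>k=1..n. (a k)\<^sup>2) \<le> 1"
    proof (cases "S = 0")
      case False
      have "0 \<le> S" by (simp add: S_def sum_nonneg)
      then have "(\<Sum>k=1..n. (a k)\<^sup>2) = (\<Sum>k=1..n. s\<^sup>2 * (c k)\<^sup>2 / S)"
        by (simp add: a_def power_divide power_mult_distrib)
      also have "\<dots> = s\<^sup>2 * S / S"
        by (simp add: S_def sum_divide_distrib[symmetric] sum_distrib_left[symmetric])
      finally show ?thesis using False s by (simp add: abs_square_le_1)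
    qed (simp add: a_def)
    have "measure M {w \<in> space M. (c, Eps w) \<in> Q}
        \<le> measure M {w \<in> space M. x \<le> (\<Sum>k=1..n. a k * eps k w)}"
      using events by (intro finite_measure_mono) auto
    also have "\<dots> \<le> subexp_tail \<alpha> u x" by (rule weighted_sum_tail_le_subexp_tail[OF x a])
    finally show "measure M {w \<in> space M. (c, Eps w) \<in> Q} \<le> subexp_tail \<alpha> u x" .
  qed
  finally show ?thesis .
qed

end

lemma subexp_tail_le:
  fixes \<alpha> u x :: real
  assumes u: "1 \<le> u" and x: "0 < x"
  shows "subexp_tail \<alpha> u x \<le> 2 * exp (- (x\<^sup>2 / (2 * (u + x powr (2 - \<alpha>)))))"
proof (cases "x < u powr (1 / (2 - \<alpha>))")
  case True
  have "x\<^sup>2 / (2 * (u + x powr (2 - \<alpha>))) \<le> x\<^sup>2 / (2 * u)"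
    using u by (intro divide_left_mono) (auto intro!: mult_pos_pos add_pos_nonneg)
  then show ?thesis using True by (simp add: subexp_tail_def)
next
  case False
  have "x\<^sup>2 = x powr \<alpha> * x powr (2 - \<alpha>)"
    using powr_add[of x \<alpha> "2 - \<alpha>"] x by simp
  also have "\<dots> \<le> x powr \<alpha> * (u + x powr (2 - \<alpha>))"
    using u by (intro mult_left_mono) auto
  finally have "x\<^sup>2 / (2 * (u + x powr (2 - \<alpha>))) \<le> (1/2) * x powr \<alpha>"
    using u by (simp add: field_simps add_pos_nonneg)
  then show ?thesis using False by (simp add: subexp_tail_def)
qed

lemma eventually_subexp_tail_sqrt_eq:
  fixes \<alpha> u x :: real
  assumes x: "0 < x"
  shows "eventually (\<lambda>n. subexp_tail \<alpha> u (sqrt (real n) * x)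
    = 2 * exp (- (x powr \<alpha> / 2) * real n powr (\<alpha> / 2))) sequentially"
proof -
  define K where "K = u powr (1 / (2 - \<alpha>))"
  have "eventually (\<lambda>n. (K / x)\<^sup>2 \<le> real n) sequentially"
    using eventually_ge_at_top[of "nat \<lceil>(K / x)\<^sup>2\<rceil>"]
    by eventually_elim (auto intro: order_trans[OF real_nat_ceiling_ge])
  then have "eventually (\<lambda>n. (K / x)\<^sup>2 \<le> real n \<and> 1 \<le> n) sequentially"
    using eventually_ge_at_top[of 1] by (rule eventually_conj)
  then show ?thesis
  proof (rule eventually_mono)
    fix n :: nat assume n: "(K / x)\<^sup>2 \<le> real n \<and> 1 \<le> n"
    then have "K / x \<le> sqrt (real n)" using real_le_rsqrt by blast
    then have "K \<le> sqrt (real n) * x" using x by (simp add: field_simps)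
    moreover have "(sqrt (real n) * x) powr \<alpha> = x powr \<alpha> * real n powr (\<alpha> / 2)"
      using x n by (simp add: powr_mult powr_half_sqrt[symmetric] powr_powr)
    ultimately show "subexp_tail \<alpha> u (sqrt (real n) * x) = 2 * exp (- (x powr \<alpha> / 2) * real n powr (\<alpha> / 2))"
      by (simp add: subexp_tail_def K_def)
  qed
qed

text \<open>The hypotheses \<open>phi_meas\<close>, \<open>phi_indep\<close> and \<open>pos\<close> are not needed: only the independence of
  the regressors from the noise is used, and where \<open>\<Sum> \<phi>\<^sub>k\<^sup>2 = 0\<close> the estimator takes the junk value
  \<open>0 / 0 = 0\<close>, so the normalised error vanishes and such outcomes lie outside every event \<open>\<dots> \<ge> x > 0\<close>.\<close>

theorem theorem3p1:
  fixes M :: "'a measure" and \<theta> \<alpha> D :: real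
    and phi eps X :: "nat \<Rightarrow> 'a \<Rightarrow> real"
  assumes "prob_space M"
    and alpha: "0 < \<alpha>" "\<alpha> < 1"
    and model: "\<And>k w. X k w = \<theta> * phi k w + eps k w"
    and phi_meas: "\<And>k. phi k \<in> borel_measurable M"
    and eps_meas: "\<And>k. eps k \<in> borel_measurable M"
    and phi_indep: "prob_space.indep_vars M (\<lambda>_. borel) phi {1..}"
    and phi_eps_indep: "prob_space.indep_var M
          (Pi\<^sub>M {1..} (\<lambda>_. borel)) (\<lambda>w. \<lambda>k\<in>{1..}. phi k w)
          (Pi\<^sub>M {1..} (\<lambda>_. borel)) (\<lambda>w. \<lambda>k\<in>{1..}. eps k w)"
    and mart_int: "\<And>i. i \<ge> 1 \<Longrightarrow> integrable M (eps i)"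
    and mart_diff: "\<And>i. i \<ge> 1 \<Longrightarrow>
          AE w in M. real_cond_exp M (nat_filtration M eps i) (eps i) w = 0"
    and moment: "\<And>i. i \<ge> 1 \<Longrightarrow>
          AE w in M. nn_cond_exp M (nat_filtration M eps i)
             (\<lambda>w. ennreal ((eps i w)\<^sup>2 * exp (\<bar>eps i w\<bar> powr \<alpha>))) w \<le> ennreal D"
    and pos: "\<And>n. n \<ge> 1 \<Longrightarrow> AE w in M. (\<Sum>k=1..n. (phi k w)\<^sup>2) > 0"
    and sign: "s \<in> {1, -1 :: real}"
  shows "(\<forall>n\<ge>1. \<forall>u\<ge>max D 1. \<forall>x>0.
            measure M {w \<in> space M.
               s * (lse phi X n w - \<theta>) * sqrt (\<Sum>k=1..n. (phi k w)\<^sup>2) \<ge> x}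
            \<le> (if x < u powr (1 / (2 - \<alpha>)) then 2 * exp (- (x\<^sup>2 / (2 * u)))
                else 2 * exp (- (1/2) * x powr \<alpha>))
          \<and> (if x < u powr (1 / (2 - \<alpha>)) then 2 * exp (- (x\<^sup>2 / (2 * u)))
                else 2 * exp (- (1/2) * x powr \<alpha>))
            \<le> 2 * exp (- (x\<^sup>2 / (2 * (u + x powr (2 - \<alpha>))))))
       \<and> (\<forall>x>0. \<exists>c>0. (\<lambda>n. measure M {w \<in> space M.
               s * (lse phi X n w - \<theta>) * sqrt (\<Sum>k=1..n. (phi k w)\<^sup>2) \<ge> sqrt (real n) * x})
            \<in> O(\<lambda>n. exp (- c * real n powr (\<alpha> / 2))))"
proof -
  interpret prob_space M by fact
  have mds: "martingale_diff_exp_moment M eps \<alpha> u" if u: "max D 1 \<le> u" for u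
  proof unfold_locales
    show "AE w in M. nn_cond_exp M (nat_filtration M eps i)
        (\<lambda>w. ennreal ((eps i w)\<^sup>2 * exp (\<bar>eps i w\<bar> powr \<alpha>))) w \<le> ennreal u" if "1 \<le> i" for i
      using moment[OF that] u by (auto elim!: eventually_mono intro: order_trans ennreal_leI)
  qed (use eps_meas mart_int mart_diff alpha u in auto)
  have s: "\<bar>s\<bar> = 1" using sign by auto
  have tail: "measure M {w \<in> space M.
      s * (lse phi X n w - \<theta>) * sqrt (\<Sum>k=1..n. (phi k w)\<^sup>2) \<ge> x} \<le> subexp_tail \<alpha> u x"
    if "max D 1 \<le> u" "0 < x" for n u x
    using martingale_diff_exp_moment.lse_error_tail_le[OF mds[OF that(1)] model phi_eps_indep s that(2)] .
  have asymptotic: "\<exists>c>0. (\<lambda>n. measure M {w \<in> space M.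
      s * (lse phi X n w - \<theta>) * sqrt (\<Sum>k=1..n. (phi k w)\<^sup>2) \<ge> sqrt (real n) * x})
    \<in> O(\<lambda>n. exp (- c * real n powr (\<alpha> / 2)))" if x: "0 < x" for x
  proof (intro exI conjI bigoI)
    show "0 < x powr \<alpha> / 2" using x by simp
    show "eventually (\<lambda>n. norm (measure M {w \<in> space M.
        s * (lse phi X n w - \<theta>) * sqrt (\<Sum>k=1..n. (phi k w)\<^sup>2) \<ge> sqrt (real n) * x})
      \<le> 2 * norm (exp (- (x powr \<alpha> / 2) * real n powr (\<alpha> / 2)))) sequentially"
      using eventually_subexp_tail_sqrt_eq[OF x, of \<alpha> "max D 1"] eventually_gt_at_top[of 0]
    proof eventually_elim
      case (elim n)
      then have "0 < sqrt (real n) * x" using x by simp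
      from tail[OF _ this, of "max D 1" n] elim(1) show ?case by simp
    qed
  qed
  show ?thesis
    using tail subexp_tail_le asymptotic unfolding subexp_tail_def by auto
qed

end
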